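(* Let $\mathcal C\subseteq\mathbb F_2^n$ be a binary linear code, $\sigma\in S_n$, and $\prec$ an admissible order on $[X]$ with $x_1\prec\dots\prec x_n$. Let $G$ be the reduced basis of $\mathcal C$ (output of Algorithm R for $\mathcal C$ with $<_e$ built from $\prec$). Define the admissible order $\prec^\sigma$ by $u\prec^\sigma v$ iff $\sigma^{-1}(u)\prec\sigma^{-1}(v)$ (so $x_{\sigma(1)}\prec^\sigma\dots\prec^\sigma x_{\sigma(n)}$). Then $\sigma(G)$ is the reduced basis of $\sigma(\mathcal C)$ with respect to the error-vector order built from $\prec^\sigma$, i.e. it is the output $G$ of Algorithm R for $\sigma(\mathcal C)$ and that order.
   Context: Binary setting: $[X]$ is the free commutative monoid on $X=\{x_1,\dots,x_n\}$; $\psi(\prod x_i^{\beta_i})=(\beta_i\bmod 2)_i\in\mathbb F_2^n$; a code of dimension $k$ has a parity check matrix $H$ ($n\times(n-k)$, code $=\{c:cH=0\}$); syndrome $\xi(w)=\psi(w)H$ (with the parity check matrix of the code under consideration). $\mathrm{Ind}(w)=\{i:x_i\mid w\}$. For an admissible order $\prec$, the error-vector order is $u<_e w$ iff $|\mathrm{Ind}(u)|<|\mathrm{Ind}(w)|$, or equality and $u\prec w$. For $\sigma\in S_n$: $\sigma((y_i)_i)=(y_{\sigma^{-1}(i)})_i$, $\sigma(\mathcal C)=\{\sigma(c):c\in\mathcal C\}$, on $[X]$ $\sigma$ is the automorphism $x_i\mapsto x_{\sigma(i)}$, and on a set of binomials it acts termwise. Algorithm R (for a code and an error-vector order $<_e$):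 keep a list $L$ sorted increasingly by $<_e$, a set $N$ and a set $G$ of binomials; initially $L=(1)$, $N=G=\emptyset$. While $L\ne\emptyset$: remove the $<_e$-smallest $w$; if $w$ is divisible by the leading word of some binomial in $G$, discard it; otherwise, if some $w'\in N$ has $\xi(w')=\xi(w)$, add $w-w'$ to $G$ (leading word $w$); else add $w$ to $N$ and insert all $wx$ ($x\in X$) into $L$. Output $(N,G)$; $G$ is the reduced basis. *)

theory Defs
  imports "HOL-Combinatorics.Permutations"
begin

section \<open>Monomials of [X], X = {x_0,...,x_(n-1)} (0-based indices)\<close>

type_synonym mono = "nat \<Rightarrow> nat"
type_synonym vec = "nat \<Rightarrow> bool"    \<comment> \<open>vector in F_2^n (True = 1)\<close>

definition monomials :: "nat \<Rightarrow> mono set" where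
  "monomials n = {m. \<forall>i. n \<le> i \<longrightarrow> m i = 0}"

definition one_mono :: mono where "one_mono = (\<lambda>_. 0)"

definition var :: "nat \<Rightarrow> mono" where "var i = (\<lambda>j. if j = i then 1 else 0)"

definition mmult :: "mono \<Rightarrow> mono \<Rightarrow> mono" where "mmult u v = (\<lambda>i. u i + v i)"

definition mdvd :: "mono \<Rightarrow> mono \<Rightarrow> bool" where "mdvd u w \<longleftrightarrow> (\<forall>i. u i \<le> w i)"

definition Ind :: "mono \<Rightarrow> nat set" where "Ind w = {i. 0 < w i}"

definition admissible :: "nat \<Rightarrow> (mono \<Rightarrow> mono \<Rightarrow> bool) \<Rightarrow> bool" where
  "admissible n ord \<longleftrightarrow>
     (\<forall>u\<in>monomials n. \<not> ord u u) \<and>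
     (\<forall>u\<in>monomials n. \<forall>v\<in>monomials n. \<forall>w\<in>monomials n. ord u v \<longrightarrow> ord v w \<longrightarrow> ord u w) \<and>
     (\<forall>u\<in>monomials n. \<forall>v\<in>monomials n. u \<noteq> v \<longrightarrow> ord u v \<or> ord v u) \<and>
     (\<forall>u\<in>monomials n. u \<noteq> one_mono \<longrightarrow> ord one_mono u) \<and>
     (\<forall>u\<in>monomials n. \<forall>v\<in>monomials n. \<forall>w\<in>monomials n. ord u v \<longrightarrow> ord (mmult u w) (mmult v w))"

definition err_less :: "(mono \<Rightarrow> mono \<Rightarrow> bool) \<Rightarrow> mono \<Rightarrow> mono \<Rightarrow> bool" where
  "err_less ord u w \<longleftrightarrow>
     card (Ind u) < card (Ind w) \<or> (card (Ind u) = card (Ind w) \<and> ord u w)"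

definition vecs :: "nat \<Rightarrow> vec set" where
  "vecs n = {y. \<forall>i. n \<le> i \<longrightarrow> \<not> y i}"

definition vadd :: "vec \<Rightarrow> vec \<Rightarrow> vec" where "vadd a b = (\<lambda>i. a i \<noteq> b i)"

definition binary_linear_code :: "nat \<Rightarrow> vec set \<Rightarrow> bool" where
  "binary_linear_code n C \<longleftrightarrow>
     C \<subseteq> vecs n \<and> (\<lambda>_. False) \<in> C \<and> (\<forall>a\<in>C. \<forall>b\<in>C. vadd a b \<in> C)"

definition psi :: "mono \<Rightarrow> vec" where "psi w = (\<lambda>i. odd (w i))"

text \<open>Equality of syndromes \<open>\<xi>(w) = \<xi>(w')\<close> w.r.t. a parity check matrix H of C:
  since C = {c. cH = 0}, \<open>\<psi>(w)H = \<psi>(w')H\<close> iff \<open>\<psi>(w) + \<psi>(w') \<in> C\<close>.\<close>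
definition same_syndrome :: "vec set \<Rightarrow> mono \<Rightarrow> mono \<Rightarrow> bool" where
  "same_syndrome C w w' \<longleftrightarrow> vadd (psi w) (psi w') \<in> C"

text \<open>State (L, N, G); L is the (duplicate-free) sorted list, represented as a set
  (it is always processed by taking its err_less-smallest element). A binomial
  w - w' with leading word w is represented by the pair (w, w').\<close>
type_synonym stateR = "mono set \<times> mono set \<times> (mono \<times> mono) set"

definition algR_step :: "nat \<Rightarrow> vec set \<Rightarrow> (mono \<Rightarrow> mono \<Rightarrow> bool) \<Rightarrow> stateR \<Rightarrow> stateR \<Rightarrow> bool" where
  "algR_step n C ord s s' \<longleftrightarrow>
     (case s of (L, N, G) \<Rightarrow>
       \<exists>w\<in>L. (\<forall>v\<in>L. v \<noteq> w \<longrightarrow> err_less ord w v) \<and>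
         (if (\<exists>g\<in>G. mdvd (fst g) w) then s' = (L - {w}, N, G)
          else if (\<exists>w'\<in>N. same_syndrome C w' w)
            then (\<exists>w'\<in>N. same_syndrome C w' w \<and> s' = (L - {w}, N, G \<union> {(w, w')}))
          else s' = ((L - {w}) \<union> {mmult w (var i) | i. i < n}, N \<union> {w}, G)))"

definition algR_init :: stateR where "algR_init = ({one_mono}, {}, {})"

definition algR_output :: "nat \<Rightarrow> vec set \<Rightarrow> (mono \<Rightarrow> mono \<Rightarrow> bool)
    \<Rightarrow> mono set \<Rightarrow> (mono \<times> mono) set \<Rightarrow> bool" where
  "algR_output n C ord N G \<longleftrightarrow> (algR_step n C ord)\<^sup>*\<^sup>* algR_init ({}, N, G)"

definition perm_vec :: "(nat \<Rightarrow> nat) \<Rightarrow> vec \<Rightarrow> vec" where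
  "perm_vec \<sigma> y = (\<lambda>i. y (inv \<sigma> i))"

definition perm_code :: "(nat \<Rightarrow> nat) \<Rightarrow> vec set \<Rightarrow> vec set" where
  "perm_code \<sigma> C = perm_vec \<sigma> ` C"

text \<open>Automorphism x_i \<mapsto> x_(\<sigma> i) of [X].\<close>
definition perm_mono :: "(nat \<Rightarrow> nat) \<Rightarrow> mono \<Rightarrow> mono" where
  "perm_mono \<sigma> m = (\<lambda>j. m (inv \<sigma> j))"

definition perm_binomials :: "(nat \<Rightarrow> nat) \<Rightarrow> (mono \<times> mono) set \<Rightarrow> (mono \<times> mono) set" where
  "perm_binomials \<sigma> G = (\<lambda>(u, v). (perm_mono \<sigma> u, perm_mono \<sigma> v)) ` G"

definition perm_order :: "(nat \<Rightarrow> nat) \<Rightarrow> (mono \<Rightarrow> mono \<Rightarrow> bool) \<Rightarrow> mono \<Rightarrow> mono \<Rightarrow> bool" where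
  "perm_order \<sigma> ord u v \<longleftrightarrow> ord (perm_mono (inv \<sigma>) u) (perm_mono (inv \<sigma>) v)"

end

theory Submission
  imports Defs
begin

text \<open>Renaming the variables by \<open>\<sigma>\<close> is an isomorphism of everything Algorithm R
  consults: it preserves supports (hence weights), divisibility and the successors \<open>w x\<^sub>i\<close>
  of a word, and it turns the syndrome test for \<open>\<C>\<close> into the one for \<open>\<sigma>(\<C>)\<close> and
  \<open>\<prec>\<close> into \<open>\<prec>\<^sup>\<sigma>\<close>. So the image of a run for \<open>\<C>\<close> is a run for \<open>\<sigma>(\<C>)\<close>, ending in
  \<open>(\<emptyset>, \<sigma>(N), \<sigma>(G))\<close>.\<close>

lemma perm_mono_inv_perm_mono:
  assumes "bij \<sigma>" shows "perm_mono (inv \<sigma>) (perm_mono \<sigma> u) = u"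
  using assms by (simp add: perm_mono_def inv_inv_eq bij_is_inj)

lemma inj_perm_mono:
  assumes "bij \<sigma>" shows "inj (perm_mono \<sigma>)"
  by (metis assms injI perm_mono_inv_perm_mono)

lemma perm_mono_one: "perm_mono \<sigma> one_mono = one_mono"
  by (simp add: perm_mono_def one_mono_def)

lemma perm_mono_mmult: "perm_mono \<sigma> (mmult u v) = mmult (perm_mono \<sigma> u) (perm_mono \<sigma> v)"
  by (simp add: perm_mono_def mmult_def)

lemma perm_mono_var:
  assumes "bij \<sigma>" shows "perm_mono \<sigma> (var i) = var (\<sigma> i)"
  using assms by (auto simp: perm_mono_def var_def fun_eq_iff bij_inv_eq_iff bij_is_inj)

lemma perm_mono_monomials:
  assumes "\<sigma> permutes {..<n}" and "m \<in> monomials n"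
  shows "perm_mono \<sigma> m \<in> monomials n"
  using assms permutes_not_in[OF permutes_inv[OF assms(1)]] by (simp add: monomials_def perm_mono_def)

lemma mdvd_perm_mono_iff:
  assumes "bij \<sigma>"
  shows "mdvd (perm_mono \<sigma> u) (perm_mono \<sigma> w) \<longleftrightarrow> mdvd u w"
  unfolding mdvd_def perm_mono_def by (metis assms bij_inv_eq_iff)

lemma Ind_perm_mono:
  assumes "bij \<sigma>" shows "Ind (perm_mono \<sigma> u) = \<sigma> ` Ind u"
  using assms unfolding Ind_def perm_mono_def
  by (auto simp: image_iff bij_is_inj) (metis bij_inv_eq_iff)

lemma card_Ind_perm_mono:
  assumes "bij \<sigma>" shows "card (Ind (perm_mono \<sigma> u)) = card (Ind u)"
  using assms by (simp add: Ind_perm_mono card_image inj_on_subset[OF bij_is_inj[OF assms]])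

lemma err_less_perm_order_iff:
  assumes "bij \<sigma>"
  shows "err_less (perm_order \<sigma> ord) (perm_mono \<sigma> u) (perm_mono \<sigma> w) \<longleftrightarrow> err_less ord u w"
  using assms by (simp add: err_less_def card_Ind_perm_mono perm_order_def perm_mono_inv_perm_mono)

lemma inj_perm_vec:
  assumes "bij \<sigma>" shows "inj (perm_vec \<sigma>)"
proof (rule injI)
  fix a b assume "perm_vec \<sigma> a = perm_vec \<sigma> b"
  then have "a (inv \<sigma> (\<sigma> i)) = b (inv \<sigma> (\<sigma> i))" for i
    unfolding perm_vec_def by metis
  then show "a = b" using assms by (simp add: bij_is_inj fun_eq_iff)
qed

lemma same_syndrome_perm_iff:
  assumes "bij \<sigma>"
  shows "same_syndrome (perm_code \<sigma> C) (perm_mono \<sigma> u) (perm_mono \<sigma> w) \<longleftrightarrow> same_syndrome C u w"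
proof -
  have "vadd (psi (perm_mono \<sigma> u)) (psi (perm_mono \<sigma> w)) = perm_vec \<sigma> (vadd (psi u) (psi w))"
    by (simp add: vadd_def psi_def perm_mono_def perm_vec_def)
  then show ?thesis
    unfolding same_syndrome_def perm_code_def
    using inj_image_mem_iff[OF inj_perm_vec[OF assms]] by simp
qed

lemma successors_perm_mono:
  assumes "\<sigma> permutes {..<n}"
  shows "{mmult (perm_mono \<sigma> w) (var i) | i. i < n} = perm_mono \<sigma> ` {mmult w (var i) | i. i < n}"
proof -
  have "{mmult (perm_mono \<sigma> w) (var i) | i. i < n} = (\<lambda>i. mmult (perm_mono \<sigma> w) (var i)) ` \<sigma> ` {..<n}"
    using permutes_image[OF assms] by auto
  also have "\<dots> = perm_mono \<sigma> ` (\<lambda>i. mmult w (var i)) ` {..<n}"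
    using permutes_bij[OF assms] by (simp add: image_image perm_mono_mmult perm_mono_var)
  also have "\<dots> = perm_mono \<sigma> ` {mmult w (var i) | i. i < n}"
    by (auto simp: image_iff)
  finally show ?thesis .
qed

lemma admissible_pullback:
  assumes adm: "admissible n ord"
    and maps: "\<And>m. m \<in> monomials n \<Longrightarrow> q m \<in> monomials n"
    and "inj q" and "q one_mono = one_mono" and "\<And>u v. q (mmult u v) = mmult (q u) (q v)"
  shows "admissible n (\<lambda>u v. ord (q u) (q v))"
proof -
  have q_eq_iff: "q u = q v \<longleftrightarrow> u = v" for u v using \<open>inj q\<close> by (auto dest: injD)
  note A = adm[unfolded admissible_def]
  show ?thesis
    unfolding admissible_def
  proof (intro conjI ballI impI)
    fix u assume "u \<in> monomials n"
    then show "\<not> ord (q u) (q u)" using A maps by blast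
  next
    fix u v w assume "u \<in> monomials n" "v \<in> monomials n" "w \<in> monomials n"
      "ord (q u) (q v)" "ord (q v) (q w)"
    then show "ord (q u) (q w)" using A maps by blast
  next
    fix u v assume "u \<in> monomials n" "v \<in> monomials n" "u \<noteq> v"
    then show "ord (q u) (q v) \<or> ord (q v) (q u)" using A maps q_eq_iff by blast
  next
    fix u assume "u \<in> monomials n" "u \<noteq> one_mono"
    then show "ord (q one_mono) (q u)" using A maps q_eq_iff \<open>q one_mono = one_mono\<close> by metis
  next
    fix u v w assume "u \<in> monomials n" "v \<in> monomials n" "w \<in> monomials n" "ord (q u) (q v)"
    then show "ord (q (mmult u w)) (q (mmult v w))" using A maps assms(5) by metis
  qed
qed

lemma admissible_perm_order:
  assumes "\<sigma> permutes {..<n}" and "admissible n ord"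
  shows "admissible n (perm_order \<sigma> ord)"
  unfolding perm_order_def
proof (rule admissible_pullback[OF assms(2)])
  have "inv \<sigma> permutes {..<n}" using assms(1) by (rule permutes_inv)
  then show "m \<in> monomials n \<Longrightarrow> perm_mono (inv \<sigma>) m \<in> monomials n" for m
    by (rule perm_mono_monomials)
  show "inj (perm_mono (inv \<sigma>))"
    using \<open>inv \<sigma> permutes {..<n}\<close> by (simp add: inj_perm_mono permutes_bij)
qed (rule perm_mono_one perm_mono_mmult)+

definition perm_state :: "(nat \<Rightarrow> nat) \<Rightarrow> stateR \<Rightarrow> stateR" where
  "perm_state \<sigma> s = (case s of (L, N, G) \<Rightarrow> (perm_mono \<sigma> ` L, perm_mono \<sigma> ` N, perm_binomials \<sigma> G))"

lemma perm_state_init: "perm_state \<sigma> algR_init = algR_init"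
  by (simp add: perm_state_def algR_init_def perm_mono_one perm_binomials_def)

lemma reducible_perm_iff:
  assumes "bij \<sigma>"
  shows "(\<exists>g\<in>perm_binomials \<sigma> G. mdvd (fst g) (perm_mono \<sigma> w)) \<longleftrightarrow> (\<exists>g\<in>G. mdvd (fst g) w)"
  by (simp add: perm_binomials_def case_prod_beta mdvd_perm_mono_iff[OF assms])

lemma algR_step_perm:
  assumes perm: "\<sigma> permutes {..<n}" and step: "algR_step n C ord s s'"
  shows "algR_step n (perm_code \<sigma> C) (perm_order \<sigma> ord) (perm_state \<sigma> s) (perm_state \<sigma> s')"
proof -
  have bij: "bij \<sigma>" using perm permutes_bij by blast
  let ?p = "perm_mono \<sigma>"
  obtain L N G where s: "s = (L, N, G)" by (cases s) auto
  from step obtain w where "w \<in> L" and min: "\<forall>v\<in>L. v \<noteq> w \<longrightarrow> err_less ord w v"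
    and branch: "if \<exists>g\<in>G. mdvd (fst g) w then s' = (L - {w}, N, G)
          else if \<exists>w'\<in>N. same_syndrome C w' w
            then \<exists>w'\<in>N. same_syndrome C w' w \<and> s' = (L - {w}, N, G \<union> {(w, w')})
          else s' = ((L - {w}) \<union> {mmult w (var i) | i. i < n}, N \<union> {w}, G)"
    unfolding algR_step_def s by auto
  have min_image: "\<forall>v\<in>?p ` L. v \<noteq> ?p w \<longrightarrow> err_less (perm_order \<sigma> ord) (?p w) v"
    using min err_less_perm_order_iff[OF bij] by auto
  have remove: "?p ` (L - {w}) = ?p ` L - {?p w}"
    using inj_perm_mono[OF bij] by (simp add: image_set_diff)
  note reducible = reducible_perm_iff[OF bij, of G w]
  have syndrome: "(\<exists>w'\<in>?p ` N. same_syndrome (perm_code \<sigma> C) w' (?p w)) \<longleftrightarrow> (\<exists>w'\<in>N. same_syndrome C w' w)"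
    using same_syndrome_perm_iff[OF bij] by auto
  consider (reduce) "\<exists>g\<in>G. mdvd (fst g) w" "s' = (L - {w}, N, G)"
    | (collision) w' where "\<not> (\<exists>g\<in>G. mdvd (fst g) w)" "w' \<in> N" "same_syndrome C w' w"
        "s' = (L - {w}, N, G \<union> {(w, w')})"
    | (expand) "\<not> (\<exists>g\<in>G. mdvd (fst g) w)" "\<not> (\<exists>w'\<in>N. same_syndrome C w' w)"
        "s' = ((L - {w}) \<union> {mmult w (var i) | i. i < n}, N \<union> {w}, G)"
    using branch by (auto split: if_splits)
  then show ?thesis
  proof cases
    case reduce
    then show ?thesis
      unfolding algR_step_def s perm_state_def prod.case
      using \<open>w \<in> L\<close> min_image reducible
      by (intro bexI[of _ "?p w"] conjI) (simp_all add: remove)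
  next
    case collision
    then have "same_syndrome (perm_code \<sigma> C) (?p w') (?p w)"
      using same_syndrome_perm_iff[OF bij] by blast
    with collision show ?thesis
      unfolding algR_step_def s perm_state_def prod.case
      using \<open>w \<in> L\<close> min_image reducible syndrome
      by (intro bexI[of _ "?p w"] conjI) (auto simp: remove perm_binomials_def)
  next
    case expand
    then show ?thesis
      unfolding algR_step_def s perm_state_def prod.case
      using \<open>w \<in> L\<close> min_image reducible syndrome
      by (intro bexI[of _ "?p w"] conjI) (simp_all add: remove successors_perm_mono[OF perm] image_Un)
  qed
qed

lemma algR_steps_perm:
  assumes "\<sigma> permutes {..<n}" and "(algR_step n C ord)\<^sup>*\<^sup>* s s'"
  shows "(algR_step n (perm_code \<sigma> C) (perm_order \<sigma> ord))\<^sup>*\<^sup>* (perm_state \<sigma> s) (perm_state \<sigma> s')"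
  using assms(2)
  by (induction rule: rtranclp_induct) (auto intro: rtranclp.rtrancl_into_rtrancl algR_step_perm[OF assms(1)])

lemma algR_output_perm:
  assumes "\<sigma> permutes {..<n}" and "algR_output n C ord N G"
  shows "algR_output n (perm_code \<sigma> C) (perm_order \<sigma> ord) (perm_mono \<sigma> ` N) (perm_binomials \<sigma> G)"
  using algR_steps_perm[OF assms(1) assms(2)[unfolded algR_output_def]]
  unfolding algR_output_def perm_state_init by (simp add: perm_state_def)

theorem theorem4p1:
  fixes n :: nat and C :: "vec set" and \<sigma> :: "nat \<Rightarrow> nat"
    and ord :: "mono \<Rightarrow> mono \<Rightarrow> bool"
    and N :: "mono set" and G :: "(mono \<times> mono) set"
  assumes "binary_linear_code n C"
    and "\<sigma> permutes {..<n}"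
    and "admissible n ord"
    and "\<forall>i j. i < j \<and> j < n \<longrightarrow> ord (var i) (var j)"
    and "algR_output n C ord N G"
  shows "admissible n (perm_order \<sigma> ord)
    \<and> (\<exists>N'. algR_output n (perm_code \<sigma> C) (perm_order \<sigma> ord) N' (perm_binomials \<sigma> G))"
  using assms(2,3,5) admissible_perm_order algR_output_perm by blast

end
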